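(* Let $q$ be a prime power and $k\ge3$, $h$ integers with $2\le h\le q$, and $1\le u_0<u_1\le\dots\le u_h$ integers. Let $U_0,U_1,\dots,U_h$ be subspaces of $\mathbf F_q^k$ of dimensions $u_0,u_1,\dots,u_h$ with $U_i\cap U_j=U_0$ for all distinct $i,j\in\{1,\dots,h\}$, and assume $q^k-q^{k-1}>q^{u_0}-1+\sum_{i=1}^h(q^{u_i}-q^{u_0})$. Let $U$ be the set of nonzero vectors of $\mathbf F_q^k$ not in $U_1\cup\dots\cup U_h$, let $\widetilde G$ be a matrix whose columns consist of exactly one representative of each class $\{\lambda\mathbf v:\lambda\in\mathbf F_q^*\}$, $\mathbf v\in U$, and let $\mathbf C$ be the linear code with generator matrix $\widetilde G$. If $u_1>(h-1)\frac{q^{u_0}-1}{q-1}$, then $\mathbf C$ is distance optimal.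
   Context: A linear $[n,k,d]_q$ code is distance optimal if no linear $[n,k,d+1]_q$ code exists. *)

theory Defs
  imports Complex_Main "HOL-Library.Function_Algebras"
begin

text \<open>Vectors over a field 'a are modelled as functions nat \<Rightarrow> 'a; the space
  F_q^n is the set of such functions supported in the coordinates 0..n-1.\<close>

definition fvec :: "nat \<Rightarrow> (nat \<Rightarrow> 'a::zero) set" where
  "fvec n = {v. \<forall>i\<ge>n. v i = 0}"

definition fscale :: "'a::field \<Rightarrow> (nat \<Rightarrow> 'a) \<Rightarrow> (nat \<Rightarrow> 'a)" where
  "fscale c v = (\<lambda>i. c * v i)"

interpretation fv: vector_space "fscale :: 'a::field \<Rightarrow> (nat \<Rightarrow> 'a) \<Rightarrow> (nat \<Rightarrow> 'a)"
  by unfold_locales (auto simp: fscale_def fun_eq_iff algebra_simps)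

definition dotp :: "nat \<Rightarrow> (nat \<Rightarrow> 'a::comm_ring) \<Rightarrow> (nat \<Rightarrow> 'a) \<Rightarrow> 'a" where
  "dotp k x y = (\<Sum>i<k. x i * y i)"

definition hweight :: "(nat \<Rightarrow> 'a::zero) \<Rightarrow> nat" where
  "hweight v = card {i. v i \<noteq> 0}"

definition min_dist :: "(nat \<Rightarrow> 'a::zero) set \<Rightarrow> nat" where
  "min_dist C = Min (hweight ` (C - {0}))"

definition linear_code :: "nat \<Rightarrow> (nat \<Rightarrow> 'a::field) set \<Rightarrow> bool" where
  "linear_code n C \<longleftrightarrow> C \<subseteq> fvec n \<and> fv.subspace C"

definition is_nkd_code :: "nat \<Rightarrow> nat \<Rightarrow> nat \<Rightarrow> (nat \<Rightarrow> 'a::field) set \<Rightarrow> bool" where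
  "is_nkd_code n k d C \<longleftrightarrow> linear_code n C \<and> fv.dim C = k \<and> min_dist C = d"

definition distance_optimal :: "nat \<Rightarrow> (nat \<Rightarrow> 'a::field) set \<Rightarrow> bool" where
  "distance_optimal n C \<longleftrightarrow> linear_code n C \<and>
     \<not> (\<exists>C' :: (nat \<Rightarrow> 'a) set. is_nkd_code n (fv.dim C) (min_dist C + 1) C')"

text \<open>The code generated by the matrix whose columns are the list cols (each in F_q^k):
  all vectors x^T G for x in F_q^k.\<close>
definition gen_code :: "nat \<Rightarrow> (nat \<Rightarrow> 'a::field) list \<Rightarrow> (nat \<Rightarrow> 'a) set" where
  "gen_code k cols = {(\<lambda>j. if j < length cols then dotp k x (cols ! j) else 0) | x. x \<in> fvec k}"

end

theory Submission
  imports Defs "HOL-Library.FuncSet" "HOL-Library.Cardinality"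
begin

(* Let X = U_1 \<union> ... \<union> U_h. The columns of the generator matrix represent the projective
   points of F_q^k outside X, so (q - 1) n = q^k - |X|, and the codeword of a message x \<noteq> 0 has
   weight equal to the number of these points off the hyperplane x^\<bottom>. Counting such points in
   F_q^k and in each U_i gives q wt \<ge> q^k - \<Sum> q^(u_i), and the hypothesis q^k - q^(k-1) > |X| - 1
   makes every weight positive; so C is an [n, k, d] code with q d \<ge> q^k - \<Sum> q^(u_i).
   A linear [n, k, d + 1] code would satisfy the Griesmer bound n \<ge> \<Sum>_(j<k) \<lceil>(d + 1) / q^j\<rceil>.
   Evaluated term by term (for j < u_1 all summands of (d + 1) / q^j except 1/q^j are integers, so the
   ceiling gains 1), the Griesmer sum exceeds n by at least ((q - 1) u_1 - (h - 1) (q^(u_0) - 1)) / (q - 1),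
   which is positive. *)

section \<open>Counting in finite vector spaces\<close>

interpretation fvp: vector_space_pair
  "fscale :: 'a::field \<Rightarrow> (nat \<Rightarrow> 'a) \<Rightarrow> _" "fscale :: 'a \<Rightarrow> (nat \<Rightarrow> 'a) \<Rightarrow> _" ..

lemma fscale_apply: "fscale c v i = c * v i"
  by (simp add: fscale_def)

lemma two_le_card_field: "2 \<le> CARD('a::{finite,field})"
proof -
  have "card {0::'a, 1} \<le> CARD('a)" by (rule card_mono) auto
  then show ?thesis by simp
qed

lemma card_span_independent:
  fixes B :: "(nat \<Rightarrow> 'a::{finite,field}) set"
  assumes "finite B" "fv.independent B"
  shows "card (fv.span B) = CARD('a) ^ card B"
  using assms
proof (induction B rule: finite_induct)
  case empty
  then show ?case by (simp add: fv.span_empty)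
next
  case (insert b B)
  have nb: "b \<notin> fv.span B"
    using insert.prems insert.hyps(2) by (auto simp: fv.independent_insert)
  let ?f = "\<lambda>(a, w). fscale a b + w"
  have img: "fv.span (insert b B) = ?f ` (UNIV \<times> fv.span B)"
  proof (rule set_eqI, rule iffI)
    fix x assume "x \<in> fv.span (insert b B)"
    then obtain a where "x - fscale a b \<in> fv.span B" using fv.span_insert by blast
    then show "x \<in> ?f ` (UNIV \<times> fv.span B)"
      by (auto intro!: image_eqI[where x="(a, x - fscale a b)"])
  next
    fix x assume "x \<in> ?f ` (UNIV \<times> fv.span B)"
    then obtain a w where "x = fscale a b + w" "w \<in> fv.span B" by auto
    then show "x \<in> fv.span (insert b B)"
      by (simp add: fv.span_insert) (metis add_diff_cancel_left')
  qed
  have "inj_on ?f (UNIV \<times> fv.span B)"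
  proof (rule inj_onI, clarify)
    fix a w a' w' assume w: "w \<in> fv.span B" "w' \<in> fv.span B"
      and eq: "fscale a b + w = fscale a' b + w'"
    show "a = a' \<and> w = w'"
    proof (cases "a = a'")
      case True
      then show ?thesis using eq by simp
    next
      case False
      have "w' i - w i = (a - a') * b i" for i
        using fun_cong[OF eq, of i] by (simp add: fscale_apply algebra_simps)
      then have "fscale (inverse (a - a')) (w' - w) = b"
        using False by (simp add: fun_eq_iff fscale_apply)
      moreover have "fscale (inverse (a - a')) (w' - w) \<in> fv.span B"
        using w by (simp add: fv.span_diff fv.span_scale)
      ultimately show ?thesis using nb by simp
    qed
  qed
  then have "card (fv.span (insert b B)) = CARD('a) * card (fv.span B)"
    unfolding img by (simp add: card_image card_cartesian_product)
  then show ?case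
    using insert by (simp add: fv.independent_insert)
qed

lemma card_subspace:
  fixes S :: "(nat \<Rightarrow> 'a::{finite,field}) set"
  assumes "fv.subspace S" "finite S"
  shows "card S = CARD('a) ^ fv.dim S"
proof -
  obtain B where B: "B \<subseteq> S" "fv.independent B" "S \<subseteq> fv.span B" "card B = fv.dim S"
    using fv.basis_exists by blast
  then have "fv.span B = S"
    using assms fv.span_subspace by blast
  with B assms show ?thesis
    using card_span_independent[of B] finite_subset by metis
qed

definition supported_on :: "nat set \<Rightarrow> (nat \<Rightarrow> 'a::zero) set" where
  "supported_on I = {v. \<forall>i. i \<notin> I \<longrightarrow> v i = 0}"

lemma fvec_eq_supported_on: "fvec k = supported_on {..<k}"
  by (auto simp: fvec_def supported_on_def)

lemma bij_betw_supported_on_PiE: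
  "bij_betw (\<lambda>v. restrict v I) (supported_on I) (I \<rightarrow>\<^sub>E (UNIV :: 'a::zero set))"
proof (rule bij_betw_byWitness[where f'="\<lambda>f i. if i \<in> I then f i else 0"])
  show "\<forall>f \<in> I \<rightarrow>\<^sub>E UNIV. restrict (\<lambda>i. if i \<in> I then f i else 0) I = f"
    by (auto simp: PiE_def extensional_def fun_eq_iff)
qed (auto simp: supported_on_def fun_eq_iff)

lemma finite_supported_on:
  assumes "finite I"
  shows "finite (supported_on I :: (nat \<Rightarrow> 'a::{finite,zero}) set)"
proof -
  have "finite (I \<rightarrow>\<^sub>E (UNIV :: 'a set))"
    using assms by (simp add: finite_PiE)
  then show ?thesis
    using bij_betw_finite[OF bij_betw_supported_on_PiE] by blast
qed

lemma card_supported_on: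
  "finite I \<Longrightarrow> card (supported_on I :: (nat \<Rightarrow> 'a::{finite,zero}) set) = CARD('a) ^ card I"
  using bij_betw_same_card[OF bij_betw_supported_on_PiE[of I]] by (simp add: card_PiE)

lemma finite_fvec: "finite (fvec k :: (nat \<Rightarrow> 'a::{finite,zero}) set)"
  by (simp add: fvec_eq_supported_on finite_supported_on)

lemma card_fvec: "card (fvec k :: (nat \<Rightarrow> 'a::{finite,zero}) set) = CARD('a) ^ k"
  by (simp add: fvec_eq_supported_on card_supported_on)

lemma subspace_fvec: "fv.subspace (fvec k :: (nat \<Rightarrow> 'a::field) set)"
  by (simp add: fv.subspace_def fvec_def fscale_apply)

lemma dim_subspace_eq:
  fixes S :: "(nat \<Rightarrow> 'a::{finite,field}) set"
  assumes "fv.subspace S" "finite S" "card S = CARD('a) ^ m"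
  shows "fv.dim S = m"
  using card_subspace[OF assms(1,2)] assms(3) two_le_card_field[where 'a='a]
  by (simp add: power_inject_exp)

lemma dim_subspace_fvec_le:
  fixes S :: "(nat \<Rightarrow> 'a::{finite,field}) set"
  assumes "fv.subspace S" "S \<subseteq> fvec k"
  shows "fv.dim S \<le> k"
proof -
  have "CARD('a) ^ fv.dim S \<le> CARD('a) ^ k"
    using assms card_subspace[OF assms(1)] card_mono[OF finite_fvec assms(2)] finite_subset[OF _ finite_fvec]
    by (metis card_fvec)
  then show ?thesis
    using two_le_card_field[where 'a='a] by (simp add: power_le_imp_le_exp)
qed

lemma dotp_add: "dotp k x (v + w) = dotp k x v + dotp k x w"
  by (simp add: dotp_def algebra_simps sum.distrib)

lemma dotp_diff: "dotp k x (v - w) = dotp k x v - dotp k x (w :: nat \<Rightarrow> 'a::comm_ring)"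
  by (simp add: dotp_def algebra_simps sum_subtractf)

lemma dotp_scale: "dotp k x (fscale c v) = c * dotp k x v"
  by (simp add: dotp_def fscale_apply sum_distrib_left algebra_simps)

lemma dotp_zero: "dotp k x 0 = 0"
  by (simp add: dotp_def)

lemma card_subspace_eq_card_kernel:
  fixes S :: "(nat \<Rightarrow> 'a::{finite,field}) set"
  assumes S: "fv.subspace S" and w: "w \<in> S" "dotp k x w \<noteq> 0"
  shows "card S = CARD('a) * card {v \<in> S. dotp k x v = 0}"
proof -
  let ?K = "{v \<in> S. dotp k x v = 0}"
  let ?w = "\<lambda>t. fscale (t / dotp k x w) w"
  have "bij_betw (\<lambda>(z, t). z + ?w t) (?K \<times> UNIV) S"
  proof (rule bij_betw_byWitness[where f'="\<lambda>v. (v - ?w (dotp k x v), dotp k x v)"])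
    show "(\<lambda>(z, t). z + ?w t) ` (?K \<times> UNIV) \<subseteq> S"
      using S w by (auto intro!: fv.subspace_add fv.subspace_scale)
    show "(\<lambda>v. (v - ?w (dotp k x v), dotp k x v)) ` S \<subseteq> ?K \<times> UNIV"
      using S w by (auto intro!: fv.subspace_diff fv.subspace_scale simp: dotp_diff dotp_scale)
  qed (use w in \<open>auto simp: dotp_add dotp_scale\<close>)
  then have "card S = card (?K \<times> (UNIV :: 'a set))"
    by (simp add: bij_betw_same_card)
  then show ?thesis
    by (simp add: card_cartesian_product)
qed

lemma card_nonorthogonal_subspace:
  fixes S :: "(nat \<Rightarrow> 'a::{finite,field}) set"
  assumes S: "fv.subspace S" "finite S" and w: "w \<in> S" "dotp k x w \<noteq> 0"
  shows "CARD('a) * card {v \<in> S. dotp k x v \<noteq> 0} = (CARD('a) - 1) * card S"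
proof -
  let ?K = "{v \<in> S. dotp k x v = 0}"
  have "{v \<in> S. dotp k x v \<noteq> 0} = S - ?K" by auto
  then have "card {v \<in> S. dotp k x v \<noteq> 0} = card S - card ?K"
    using S(2) by (simp add: card_Diff_subset)
  then show ?thesis
    using card_subspace_eq_card_kernel[OF S(1) w] by (simp add: algebra_simps)
qed

lemma card_nonorthogonal_subspace_le:
  fixes S :: "(nat \<Rightarrow> 'a::{finite,field}) set"
  assumes "fv.subspace S" "finite S"
  shows "CARD('a) * card {v \<in> S. dotp k x v \<noteq> 0} \<le> (CARD('a) - 1) * card S"
proof (cases "\<exists>w \<in> S. dotp k x w \<noteq> 0")
  case True
  then show ?thesis using card_nonorthogonal_subspace[OF assms] by fastforce
next
  case False
  then have "{v \<in> S. dotp k x v \<noteq> 0} = {}" by auto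
  then show ?thesis by (simp only: card.empty mult_0_right zero_le)
qed

lemma card_nonorthogonal_fvec:
  fixes x :: "nat \<Rightarrow> 'a::{finite,field}"
  assumes "x \<in> fvec k" "x \<noteq> 0"
  shows "CARD('a) * card {v \<in> fvec k. dotp k x v \<noteq> 0} = (CARD('a) - 1) * CARD('a) ^ k"
proof -
  obtain i where i: "x i \<noteq> 0" using assms(2) by (auto simp: fun_eq_iff)
  then have "i < k" using assms(1) by (auto simp: fvec_def not_less[symmetric])
  define e :: "nat \<Rightarrow> 'a" where "e = (\<lambda>j. if j = i then 1 else 0)"
  have "e \<in> fvec k" using \<open>i < k\<close> by (simp add: e_def fvec_def)
  moreover have "dotp k x e = x i"
    using \<open>i < k\<close> by (simp add: dotp_def e_def if_distrib cong: if_cong)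
  ultimately show ?thesis
    using card_nonorthogonal_subspace[OF subspace_fvec finite_fvec, where w=e] i
    by (simp add: card_fvec)
qed

section \<open>The Griesmer bound\<close>

lemma sum_card_filter_swap:
  assumes "finite A" "finite B"
  shows "(\<Sum>a\<in>A. card {b \<in> B. P a b}) = (\<Sum>b\<in>B. card {a \<in> A. P a b})"
proof -
  have "(\<Sum>a\<in>A. card {b \<in> B. P a b}) = (\<Sum>a\<in>A. \<Sum>b\<in>B. if P a b then 1 else 0)"
    using assms by (simp add: sum.inter_filter[symmetric])
  also have "\<dots> = (\<Sum>b\<in>B. \<Sum>a\<in>A. if P a b then 1 else 0)"
    by (rule sum.swap)
  also have "\<dots> = (\<Sum>b\<in>B. card {a \<in> A. P a b})"
    using assms by (simp add: sum.inter_filter[symmetric])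
  finally show ?thesis .
qed

lemma min_dist_le: "finite C \<Longrightarrow> v \<in> C \<Longrightarrow> v \<noteq> 0 \<Longrightarrow> min_dist C \<le> hweight v"
  unfolding min_dist_def by (rule Min_le) auto

lemma min_dist_attained:
  assumes "finite C" "v \<in> C" "v \<noteq> 0"
  obtains c where "c \<in> C" "c \<noteq> 0" "hweight c = min_dist C"
proof -
  have "min_dist C \<in> hweight ` (C - {0})"
    unfolding min_dist_def using assms by (intro Min_in) auto
  then obtain c where "c \<in> C" "c \<noteq> 0" "min_dist C = hweight c" by blast
  then show ?thesis by (intro that[of c]) simp_all
qed

lemma min_weight_word_exists:
  assumes "finite C" "\<not> C \<subseteq> {0}"
  obtains c where "c \<in> C" "c \<noteq> 0" "\<And>v. v \<in> C \<Longrightarrow> v \<noteq> 0 \<Longrightarrow> hweight c \<le> hweight v"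
proof -
  obtain v where "v \<in> C" "v \<noteq> 0"
    using assms(2) by blast
  then obtain c where "c \<in> C" "c \<noteq> 0" "hweight c = min_dist C"
    using min_dist_attained assms(1) by metis
  then show ?thesis
    using that min_dist_le[OF assms(1)] by simp
qed

definition puncture :: "nat set \<Rightarrow> (nat \<Rightarrow> 'a::zero) \<Rightarrow> (nat \<Rightarrow> 'a)" where
  "puncture S v = (\<lambda>i. if i \<in> S then 0 else v i)"

lemma linear_puncture: "Vector_Spaces.linear fscale fscale (puncture S :: (nat \<Rightarrow> 'a::field) \<Rightarrow> _)"
  by (auto simp: Vector_Spaces.linear_iff fv.vector_space_axioms puncture_def fun_eq_iff fscale_apply)

lemma puncture_supported_on: "v \<in> supported_on I \<Longrightarrow> puncture S v \<in> supported_on (I - S)"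
  by (simp add: puncture_def supported_on_def)

context
  fixes C :: "(nat \<Rightarrow> 'a::{finite,field}) set" and I :: "nat set" and c :: "nat \<Rightarrow> 'a"
  assumes C: "fv.subspace C" "C \<subseteq> supported_on I" and I: "finite I"
    and c: "c \<in> C" "c \<noteq> 0" and c_min: "\<And>v. v \<in> C \<Longrightarrow> v \<noteq> 0 \<Longrightarrow> hweight c \<le> hweight v"
begin

private lemma finite_support: "finite {i. c i \<noteq> 0}"
  using c(1) C(2) I by (auto simp: supported_on_def intro: finite_subset)

text \<open>Subtracting the right multiple of c kills one coordinate of the support of c and leaves
  a codeword of smaller weight than c.\<close>
lemma puncture_eq_0_imp_multiple:
  assumes d: "d \<in> C" "puncture {i. c i \<noteq> 0} d = 0" and i0: "c i0 \<noteq> 0"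
  shows "d = fscale (d i0 / c i0) c"
proof -
  define e where "e = d - fscale (d i0 / c i0) c"
  have "e \<in> C" unfolding e_def using d c C(1) by (blast intro: fv.subspace_diff fv.subspace_scale)
  have "d i = 0" if "c i = 0" for i
    using fun_cong[OF d(2), of i] that by (simp add: puncture_def)
  then have "{i. e i \<noteq> 0} \<subseteq> {i. c i \<noteq> 0} - {i0}"
    using i0 by (auto simp: e_def fscale_apply)
  then have "card {i. e i \<noteq> 0} \<le> card ({i. c i \<noteq> 0} - {i0})"
    using finite_support by (intro card_mono) auto
  also have "\<dots> < card {i. c i \<noteq> 0}"
    using finite_support i0 by (intro card_Diff1_less) auto
  finally have "hweight e < hweight c" by (simp add: hweight_def)
  then have "e = 0" using c_min \<open>e \<in> C\<close> by (meson not_le)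
  then show ?thesis by (simp add: e_def)
qed

lemma card_residual_code: "card C = CARD('a) * card (puncture {i. c i \<noteq> 0} ` C)"
proof -
  define S where "S = {i. c i \<noteq> 0}"
  obtain i0 where i0: "c i0 \<noteq> 0" using c(2) by (auto simp: fun_eq_iff)
  have "bij_betw (\<lambda>v. (puncture S v, v i0)) C (puncture S ` C \<times> UNIV)"
  proof (rule bij_betwI')
    fix v w assume "v \<in> C" "w \<in> C"
    then have "v - w \<in> C" using C(1) by (blast intro: fv.subspace_diff)
    show "((puncture S v, v i0) = (puncture S w, w i0)) = (v = w)"
    proof
      assume eq: "(puncture S v, v i0) = (puncture S w, w i0)"
      have "puncture S (v - w) = puncture S v - puncture S w"
        by (rule fvp.linear_diff[OF linear_puncture])
      with eq have "puncture S (v - w) = 0" by simp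
      with \<open>v - w \<in> C\<close> have "v - w = fscale ((v - w) i0 / c i0) c"
        using i0 by (intro puncture_eq_0_imp_multiple) (auto simp: S_def)
      also have "\<dots> = 0" using eq by (simp add: fun_eq_iff fscale_apply)
      finally show "v = w" by simp
    qed simp
  next
    fix y assume "y \<in> puncture S ` C \<times> (UNIV :: 'a set)"
    then obtain v t where y: "y = (puncture S v, t)" "v \<in> C" by auto
    define v' where "v' = v + fscale ((t - v i0) / c i0) c"
    have "v' \<in> C" unfolding v'_def using y c C(1) by (blast intro: fv.subspace_add fv.subspace_scale)
    moreover have "puncture S v' = puncture S v" "v' i0 = t"
      using i0 by (auto simp: v'_def S_def puncture_def fscale_apply fun_eq_iff)
    ultimately show "\<exists>v \<in> C. y = (puncture S v, v i0)" using y by (intro bexI[of _ v']) auto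
  qed auto
  then have "card C = card (puncture S ` C \<times> (UNIV :: 'a set))"
    by (rule bij_betw_same_card)
  then show ?thesis
    by (simp add: card_cartesian_product S_def)
qed

text \<open>Sum the minimality bound for the nonzero words v + a c over all a: each coordinate in
  the support S of c vanishes for exactly one a, so q |S| \<le> (q - 1) |S| + q wt r.\<close>
lemma weight_residual_code:
  assumes r: "r \<in> puncture {i. c i \<noteq> 0} ` C" "r \<noteq> 0"
  shows "hweight c \<le> CARD('a) * hweight r"
proof -
  define S where "S = {i. c i \<noteq> 0}"
  obtain v where v: "v \<in> C" "r = puncture S v" using r by (auto simp: S_def)
  have bound: "card S \<le> card {i \<in> S. v i + a * c i \<noteq> 0} + hweight r" for a
  proof -
    let ?w = "v + fscale a c"
    have "?w \<in> C" using v c C(1) by (blast intro: fv.subspace_add fv.subspace_scale)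
    moreover have "puncture S ?w = r"
      using v by (auto simp: S_def puncture_def fscale_apply fun_eq_iff)
    then have "?w \<noteq> 0" using r(2) by (auto simp: puncture_def)
    ultimately have "card S \<le> hweight ?w" using c_min[of ?w] by (simp add: S_def hweight_def)
    also have "hweight ?w = card ({i \<in> S. v i + a * c i \<noteq> 0} \<union> {i. r i \<noteq> 0})"
      unfolding hweight_def
      by (rule arg_cong[where f=card]) (auto simp: v S_def puncture_def fscale_apply)
    also have "\<dots> \<le> card {i \<in> S. v i + a * c i \<noteq> 0} + hweight r"
      unfolding hweight_def by (rule card_Un_le)
    finally show ?thesis .
  qed
  have zeros: "card {a. v i + a * c i \<noteq> 0} = CARD('a) - 1" if "i \<in> S" for i
  proof -
    have "{a. v i + a * c i \<noteq> 0} = UNIV - {- v i / c i}"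
      using that by (auto simp: S_def field_simps add_eq_0_iff)
    then show ?thesis by (simp add: card_Diff_subset)
  qed
  have "CARD('a) * card S \<le> (\<Sum>a\<in>UNIV. card {i \<in> S. v i + a * c i \<noteq> 0} + hweight r)"
    using sum_mono[OF bound, of UNIV] by simp
  also have "\<dots> = (\<Sum>i\<in>S. card {a. v i + a * c i \<noteq> 0}) + CARD('a) * hweight r"
    using finite_support sum_card_filter_swap[of UNIV S "\<lambda>a i. v i + a * c i \<noteq> 0"]
    by (simp add: sum.distrib S_def)
  also have "\<dots> = (CARD('a) - 1) * card S + CARD('a) * hweight r"
    by (simp add: zeros)
  finally show ?thesis
    by (cases "CARD('a)") (simp_all add: S_def hweight_def algebra_simps)
qed

end

theorem griesmer_bound:
  fixes C :: "(nat \<Rightarrow> 'a::{finite,field}) set"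
  assumes "finite I" "fv.subspace C" "C \<subseteq> supported_on I" "card C = CARD('a) ^ m"
    and "\<And>v. v \<in> C \<Longrightarrow> v \<noteq> 0 \<Longrightarrow> D \<le> real (hweight v)"
  shows "(\<Sum>j<m. \<lceil>D / real CARD('a) ^ j\<rceil>) \<le> int (card I)"
  using assms
proof (induction m arbitrary: C I D)
  case 0
  then show ?case by simp
next
  case (Suc m)
  let ?q = "CARD('a)"
  have "finite C"
    using Suc.prems(1,3) finite_supported_on finite_subset by blast
  moreover have "\<not> C \<subseteq> {0}"
    using Suc.prems(4) card_mono[of "{0}" C] one_less_power[of ?q "Suc m"] two_le_card_field[where 'a='a]
    by auto
  ultimately obtain c where c: "c \<in> C" "c \<noteq> 0"
    and c_min: "\<And>w. w \<in> C \<Longrightarrow> w \<noteq> 0 \<Longrightarrow> hweight c \<le> hweight w"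
    using min_weight_word_exists by blast
  define S where "S = {i. c i \<noteq> 0}"
  define R where "R = puncture S ` C"
  have "S \<subseteq> I"
    using c(1) Suc.prems(3) by (auto simp: S_def supported_on_def)
  have "finite (I - S)"
    using Suc.prems(1) by simp
  moreover have "fv.subspace R"
    unfolding R_def using Suc.prems(2) by (rule fvp.linear_subspace_image[OF linear_puncture])
  moreover have "R \<subseteq> supported_on (I - S)"
    using Suc.prems(3) puncture_supported_on by (auto simp: R_def)
  moreover have "card R = ?q ^ m"
    using card_residual_code[OF Suc.prems(2,3,1) c(1,2) c_min] Suc.prems(4)
    by (simp add: R_def S_def)
  moreover have "D / ?q \<le> real (hweight r)" if "r \<in> R" "r \<noteq> 0" for r
  proof -
    have "D \<le> real (hweight c)" using Suc.prems(5) c(1,2) .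
    also have "\<dots> \<le> ?q * real (hweight r)"
      using weight_residual_code[OF Suc.prems(2,3,1) c(1,2) c_min] that
      by (simp add: R_def S_def flip: of_nat_mult)
    finally show ?thesis by (simp add: divide_le_eq mult.commute)
  qed
  ultimately have IH: "(\<Sum>j<m. \<lceil>(D / ?q) / real ?q ^ j\<rceil>) \<le> int (card (I - S))"
    by (rule Suc.IH)
  have "\<lceil>D\<rceil> \<le> int (card S)"
    using Suc.prems(5)[OF c(1,2)] by (simp add: S_def hweight_def ceiling_le_iff)
  then have "(\<Sum>j<Suc m. \<lceil>D / real ?q ^ j\<rceil>) \<le> int (card S) + int (card (I - S))"
    using IH by (simp add: sum.lessThan_Suc_shift divide_divide_eq_left del: sum.lessThan_Suc)
  also have "\<dots> = int (card I)"
    using \<open>S \<subseteq> I\<close> Suc.prems(1) by (simp add: card_Diff_subset card_mono finite_subset)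
  finally show ?case .
qed

lemma distance_optimal_if_griesmer_violated:
  fixes C :: "(nat \<Rightarrow> 'a::{finite,field}) set"
  assumes C: "linear_code n C" and D: "D \<le> real (min_dist C) + 1"
    and violated: "int n < (\<Sum>j<fv.dim C. \<lceil>D / real CARD('a) ^ j\<rceil>)"
  shows "distance_optimal n C"
  unfolding distance_optimal_def
proof (intro conjI notI)
  show "linear_code n C" by (rule C)
next
  assume "\<exists>C' :: (nat \<Rightarrow> 'a) set. is_nkd_code n (fv.dim C) (min_dist C + 1) C'"
  then obtain C' :: "(nat \<Rightarrow> 'a) set"
    where C': "fv.subspace C'" "C' \<subseteq> supported_on {..<n}" "fv.dim C' = fv.dim C"
      "min_dist C' = min_dist C + 1"
    by (auto simp: is_nkd_code_def linear_code_def fvec_eq_supported_on)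
  then have "finite C'"
    using finite_supported_on finite_subset by blast
  have "(\<Sum>j<fv.dim C. \<lceil>D / real CARD('a) ^ j\<rceil>) \<le> int (card {..<n})"
  proof (rule griesmer_bound[OF _ C'(1,2)])
    show "card C' = CARD('a) ^ fv.dim C"
      using card_subspace[OF C'(1) \<open>finite C'\<close>] C'(3) by simp
    show "D \<le> real (hweight v)" if "v \<in> C'" "v \<noteq> 0" for v
      using min_dist_le[OF \<open>finite C'\<close> that] C'(4) D by simp
  qed simp
  with violated show False by simp
qed

section \<open>Codes from projective point sets\<close>

definition encode :: "nat \<Rightarrow> (nat \<Rightarrow> 'a::comm_ring) list \<Rightarrow> (nat \<Rightarrow> 'a) \<Rightarrow> (nat \<Rightarrow> 'a)" where
  "encode k cols x = (\<lambda>j. if j < length cols then dotp k x (cols ! j) else 0)"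

lemma gen_code_eq_image_encode: "gen_code k cols = encode k cols ` fvec k"
  by (auto simp: gen_code_def encode_def)

lemma linear_encode: "Vector_Spaces.linear fscale fscale (encode k cols :: (nat \<Rightarrow> 'a::field) \<Rightarrow> _)"
  by (auto simp: Vector_Spaces.linear_iff fv.vector_space_axioms encode_def fun_eq_iff fscale_apply
      dotp_def sum.distrib sum_distrib_left algebra_simps)

lemma hweight_encode:
  "hweight (encode k cols x) = card {j. j < length cols \<and> dotp k x (cols ! j) \<noteq> 0}"
  unfolding hweight_def encode_def by (rule arg_cong[where f=card]) auto

lemma linear_code_gen_code: "linear_code (length cols) (gen_code k cols :: (nat \<Rightarrow> 'a::field) set)"
  unfolding linear_code_def gen_code_eq_image_encode
  using fvp.linear_subspace_image[OF linear_encode subspace_fvec]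
  by (auto simp: fvec_def encode_def)

lemma dim_min_dist_gen_code:
  fixes cols :: "(nat \<Rightarrow> 'a::{finite,field}) list"
  assumes "0 < k"
    and weights: "\<And>x. x \<in> fvec k \<Longrightarrow> x \<noteq> 0 \<Longrightarrow> encode k cols x \<noteq> 0 \<and> d \<le> real (hweight (encode k cols x))"
  shows "fv.dim (gen_code k cols) = k" and "d \<le> real (min_dist (gen_code k cols))"
proof -
  have "inj_on (encode k cols) (fvec k)"
    unfolding fvp.linear_inj_on_iff_eq_0[OF linear_encode subspace_fvec] using weights by blast
  then have "card (gen_code k cols) = CARD('a) ^ k"
    by (simp add: gen_code_eq_image_encode card_image card_fvec)
  moreover have "finite (gen_code k cols)"
    by (simp add: gen_code_eq_image_encode finite_fvec)
  ultimately show "fv.dim (gen_code k cols) = k"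
    using linear_code_gen_code by (intro dim_subspace_eq) (auto simp: linear_code_def)
  define e :: "nat \<Rightarrow> 'a" where "e = (\<lambda>i. if i = 0 then 1 else 0)"
  have "e \<in> fvec k" "e \<noteq> 0"
    using assms(1) by (auto simp: e_def fvec_def fun_eq_iff)
  then have "encode k cols e \<in> gen_code k cols" "encode k cols e \<noteq> 0"
    using weights by (auto simp: gen_code_eq_image_encode)
  then obtain c where c: "c \<in> gen_code k cols" "c \<noteq> 0" "hweight c = min_dist (gen_code k cols)"
    using min_dist_attained \<open>finite (gen_code k cols)\<close> by metis
  then obtain x where "x \<in> fvec k" "c = encode k cols x"
    by (auto simp: gen_code_eq_image_encode)
  moreover have "x \<noteq> 0"
    using c(2) calculation fvp.linear_0[OF linear_encode] by auto
  ultimately show "d \<le> real (min_dist (gen_code k cols))"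
    using weights c(3) by metis
qed

definition proj_representatives :: "(nat \<Rightarrow> 'a::field) set \<Rightarrow> (nat \<Rightarrow> 'a) list \<Rightarrow> bool" where
  "proj_representatives P cols \<longleftrightarrow> set cols \<subseteq> P \<and>
     (\<forall>v\<in>P. \<exists>!j. j < length cols \<and> (\<exists>c. c \<noteq> 0 \<and> cols ! j = fscale c v))"

lemma card_proj_representatives:
  fixes cols :: "(nat \<Rightarrow> 'a::{finite,field}) list"
  assumes reps: "proj_representatives P cols" and "0 \<notin> P"
    and P_scale: "\<And>c v. c \<noteq> 0 \<Longrightarrow> v \<in> P \<Longrightarrow> fscale c v \<in> P"
    and Q_scale: "\<And>c v. c \<noteq> 0 \<Longrightarrow> Q (fscale c v) = Q v"
  shows "card {v \<in> P. Q v} = (CARD('a) - 1) * card {j. j < length cols \<and> Q (cols ! j)}"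
proof -
  let ?J = "{j. j < length cols \<and> Q (cols ! j)}"
  let ?f = "\<lambda>(j, c). fscale c (cols ! j)"
  have cols: "cols ! j \<in> P" if "j < length cols" for j
    using reps that by (auto simp: proj_representatives_def)
  have unique: "j = j'" if "j < length cols" "j' < length cols" "c \<noteq> 0" "cols ! j' = fscale c (cols ! j)"
    for j j' c
  proof -
    have "\<exists>!i. i < length cols \<and> (\<exists>c. c \<noteq> 0 \<and> cols ! i = fscale c (cols ! j))"
      using reps cols[OF that(1)] by (auto simp: proj_representatives_def)
    moreover have "cols ! j = fscale 1 (cols ! j)" by simp
    ultimately show ?thesis using that by (metis one_neq_zero)
  qed
  have inj: "inj_on ?f (?J \<times> (UNIV - {0}))"
  proof (rule inj_onI)
    fix a b assume "a \<in> ?J \<times> (UNIV - {0})" "b \<in> ?J \<times> (UNIV - {0})" and eq: "?f a = ?f b"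
    then obtain j c j' c' where ab: "a = (j, c)" "b = (j', c')"
      and j: "j < length cols" "j' < length cols" and c: "c \<noteq> 0" "c' \<noteq> 0"
      by auto
    from eq have eq': "fscale c (cols ! j) = fscale c' (cols ! j')"
      by (simp add: ab)
    then have "cols ! j' = fscale (c / c') (cols ! j)"
      using c by (metis fv.scale_one fv.scale_scale divide_inverse_commute field_class.field_inverse)
    then have "j = j'" using unique[OF j, of "c / c'"] c by simp
    moreover obtain i where "(cols ! j) i \<noteq> 0"
      using cols[OF j(1)] \<open>0 \<notin> P\<close> by (metis fun_eq_iff zero_fun_def)
    ultimately show "a = b"
      using fun_cong[OF eq', of i] by (simp add: ab fscale_apply)
  qed
  have img: "?f ` (?J \<times> (UNIV - {0})) = {v \<in> P. Q v}"
  proof (rule set_eqI, rule iffI)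
    fix v assume "v \<in> ?f ` (?J \<times> (UNIV - {0}))"
    then show "v \<in> {v \<in> P. Q v}" using cols P_scale Q_scale by auto
  next
    fix v assume v: "v \<in> {v \<in> P. Q v}"
    then obtain j c where "j < length cols" "c \<noteq> 0" "cols ! j = fscale c v"
      using reps by (auto simp: proj_representatives_def)
    moreover have "v = fscale (inverse c) (cols ! j)" using calculation by simp
    ultimately show "v \<in> ?f ` (?J \<times> (UNIV - {0}))"
      using v Q_scale by (auto intro!: image_eqI[where x="(j, inverse c)"])
  qed
  have "card {v \<in> P. Q v} = card (?J \<times> (UNIV - {0 :: 'a}))"
    using card_image[OF inj] img by simp
  then show ?thesis by (simp add: card_cartesian_product card_Diff_subset)
qed

context
  fixes X :: "(nat \<Rightarrow> 'a::{finite,field}) set" and cols :: "(nat \<Rightarrow> 'a) list" and k :: nat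
  assumes X: "X \<subseteq> fvec k" "\<And>c v. v \<in> X \<Longrightarrow> fscale c v \<in> X"
    and reps: "proj_representatives (fvec k - {0} - X) cols"
begin

private lemma complement_scale_closed:
  assumes "c \<noteq> 0" "v \<in> fvec k - {0} - X"
  shows "fscale c v \<in> fvec k - {0} - X"
proof -
  have "fscale (inverse c) (fscale c v) = v" using assms(1) by simp
  then show ?thesis
    using assms X(2)[where c="inverse c" and v="fscale c v"] fv.subspace_scale[OF subspace_fvec]
    by (auto simp: fv.scale_eq_0_iff)
qed

lemma length_complement_code:
  "(CARD('a) - 1) * length cols + card (insert 0 X) = CARD('a) ^ k"
proof -
  have "card (fvec k - {0} - X) = (CARD('a) - 1) * length cols"
    using card_proj_representatives[OF reps _ complement_scale_closed, of "\<lambda>_. True"]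
    by (simp only: simp_thms Collect_mem_eq) simp
  moreover have "fvec k = (fvec k - {0} - X) \<union> insert 0 X"
    using X(1) fv.subspace_0[OF subspace_fvec] by blast
  moreover have "finite X"
    using X(1) finite_fvec by (rule finite_subset)
  then have "card ((fvec k - {0} - X) \<union> insert 0 X) = card (fvec k - {0} - X) + card (insert 0 X)"
    by (intro card_Un_disjoint) (auto simp: finite_fvec)
  ultimately show ?thesis
    by (metis card_fvec)
qed

lemma weight_complement_code:
  assumes "x \<in> fvec k" "x \<noteq> 0"
  shows "(real CARD('a) - 1) * real (hweight (encode k cols x)) + real (card {v \<in> X. dotp k x v \<noteq> 0})
    = (real CARD('a) - 1) * real CARD('a) ^ (k - 1)"
proof -
  let ?w = "hweight (encode k cols x)" and ?N = "{v \<in> X. dotp k x v \<noteq> 0}"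
  have "card {v \<in> fvec k - {0} - X. dotp k x v \<noteq> 0} = (CARD('a) - 1) * ?w"
    unfolding hweight_encode
    by (rule card_proj_representatives[OF reps _ complement_scale_closed]) (auto simp: dotp_scale)
  moreover have "{v \<in> fvec k. dotp k x v \<noteq> 0} = {v \<in> fvec k - {0} - X. dotp k x v \<noteq> 0} \<union> ?N"
    using X(1) by (auto simp: dotp_zero)
  moreover have "card \<dots> = card {v \<in> fvec k - {0} - X. dotp k x v \<noteq> 0} + card ?N"
    using X(1) by (intro card_Un_disjoint) (auto intro: finite_subset[OF _ finite_fvec])
  ultimately have "CARD('a) * ((CARD('a) - 1) * ?w + card ?N) = (CARD('a) - 1) * CARD('a) ^ k"
    using card_nonorthogonal_fvec[OF assms] by simp
  then have "real (CARD('a) * ((CARD('a) - 1) * ?w + card ?N)) = real ((CARD('a) - 1) * CARD('a) ^ k)"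
    by (rule arg_cong)
  moreover have "1 \<le> CARD('a)"
    using two_le_card_field[where 'a='a] by simp
  ultimately have "real CARD('a) * ((real CARD('a) - 1) * real ?w + real (card ?N))
      = (real CARD('a) - 1) * real CARD('a) ^ k"
    by (simp only: of_nat_mult of_nat_add of_nat_diff of_nat_1 of_nat_power)
  also have "\<dots> = real CARD('a) * ((real CARD('a) - 1) * real CARD('a) ^ (k - 1))"
    using assms by (cases k) (auto simp: fvec_def fun_eq_iff)
  finally show ?thesis
    by simp
qed

end

lemma card_UN_common_intersection:
  assumes J: "finite J" "2 \<le> card J" and A: "\<And>i. i \<in> J \<Longrightarrow> finite (A i)"
    and B: "\<And>i j. i \<in> J \<Longrightarrow> j \<in> J \<Longrightarrow> i \<noteq> j \<Longrightarrow> A i \<inter> A j = B"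
  shows "(of_nat (card (\<Union>i\<in>J. A i)) :: 'b::ring_1)
    = of_nat (card B) + (\<Sum>i\<in>J. of_nat (card (A i)) - of_nat (card B))"
proof -
  have B_sub: "B \<subseteq> A i" if "i \<in> J" for i
  proof -
    have "card (J - {i}) \<noteq> 0"
      using J that by simp
    then obtain j where "j \<in> J - {i}"
      by (metis card.empty ex_in_conv)
    then show ?thesis
      using B[OF that] by blast
  qed
  obtain i0 where "i0 \<in> J"
    using J by fastforce
  then have "finite B"
    using A B_sub finite_subset by blast
  have "(\<Union>i\<in>J. A i) = B \<union> (\<Union>i\<in>J. A i - B)"
    using B_sub \<open>i0 \<in> J\<close> by blast
  also have "card \<dots> = card B + card (\<Union>i\<in>J. A i - B)"
    using J(1) A \<open>finite B\<close> by (intro card_Un_disjoint) auto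
  also have "card (\<Union>i\<in>J. A i - B) = (\<Sum>i\<in>J. card (A i - B))"
    using J(1) A B by (intro card_UN_disjoint) blast+
  finally have "card (\<Union>i\<in>J. A i) = card B + (\<Sum>i\<in>J. card (A i - B))" .
  moreover have "(of_nat (card (A i - B)) :: 'b) = of_nat (card (A i)) - of_nat (card B)" if "i \<in> J" for i
    using card_Diff_subset[OF \<open>finite B\<close> B_sub] card_mono[OF A B_sub] that by (simp add: of_nat_diff)
  ultimately show ?thesis
    by simp
qed

lemma fscale_mem_UN_subspaces:
  "(\<And>i. i \<in> J \<Longrightarrow> fv.subspace (U i)) \<Longrightarrow> v \<in> (\<Union>i\<in>J. U i) \<Longrightarrow> fscale c v \<in> (\<Union>i\<in>J. U i)"
  by (blast intro: fv.subspace_scale)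

lemma card_nonorthogonal_UN_subspaces_le:
  fixes U :: "'i \<Rightarrow> (nat \<Rightarrow> 'a::{finite,field}) set"
  assumes "finite J" "\<And>i. i \<in> J \<Longrightarrow> fv.subspace (U i)" "\<And>i. i \<in> J \<Longrightarrow> finite (U i)"
  shows "CARD('a) * card {v \<in> (\<Union>i\<in>J. U i). dotp k x v \<noteq> 0} \<le> (CARD('a) - 1) * (\<Sum>i\<in>J. card (U i))"
proof -
  have "card {v \<in> (\<Union>i\<in>J. U i). dotp k x v \<noteq> 0} \<le> (\<Sum>i\<in>J. card {v \<in> U i. dotp k x v \<noteq> 0})"
  proof -
    have "{v \<in> (\<Union>i\<in>J. U i). dotp k x v \<noteq> 0} = (\<Union>i\<in>J. {v \<in> U i. dotp k x v \<noteq> 0})"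
      by auto
    then show ?thesis using card_UN_le[OF assms(1)] by simp
  qed
  then have "CARD('a) * card {v \<in> (\<Union>i\<in>J. U i). dotp k x v \<noteq> 0}
      \<le> (\<Sum>i\<in>J. CARD('a) * card {v \<in> U i. dotp k x v \<noteq> 0})"
    by (simp only: sum_distrib_left[symmetric] mult_le_mono2)
  also have "\<dots> \<le> (\<Sum>i\<in>J. (CARD('a) - 1) * card (U i))"
    using assms by (intro sum_mono card_nonorthogonal_subspace_le) auto
  finally show ?thesis by (simp add: sum_distrib_left)
qed

context
  fixes U :: "'i \<Rightarrow> (nat \<Rightarrow> 'a::{finite,field}) set" and J :: "'i set" and k :: nat
    and cols :: "(nat \<Rightarrow> 'a) list" and x :: "nat \<Rightarrow> 'a"
  assumes J: "finite J" and U: "\<And>i. i \<in> J \<Longrightarrow> fv.subspace (U i) \<and> U i \<subseteq> fvec k"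
    and reps: "proj_representatives (fvec k - {0} - (\<Union>i\<in>J. U i)) cols"
    and x: "x \<in> fvec k" "x \<noteq> 0"
begin

private lemma finite_U: "i \<in> J \<Longrightarrow> finite (U i)"
  using U finite_fvec finite_subset by blast

private lemma weight_identity:
  "(real CARD('a) - 1) * real (hweight (encode k cols x))
    + real (card {v \<in> (\<Union>i\<in>J. U i). dotp k x v \<noteq> 0}) = (real CARD('a) - 1) * real CARD('a) ^ (k - 1)"
  using U fscale_mem_UN_subspaces[of J U]
  by (intro weight_complement_code[OF _ _ reps x]) auto

lemma weight_complement_UN_code_ge:
  "(real CARD('a) ^ k - (\<Sum>i\<in>J. real (card (U i)))) / real CARD('a) \<le> real (hweight (encode k cols x))"
proof -
  let ?q = "real CARD('a)" and ?w = "real (hweight (encode k cols x))"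
    and ?N = "real (card {v \<in> (\<Union>i\<in>J. U i). dotp k x v \<noteq> 0})"
  have q: "2 \<le> ?q"
    using two_le_card_field[where 'a='a] by simp
  have "CARD('a) * card {v \<in> (\<Union>i\<in>J. U i). dotp k x v \<noteq> 0} \<le> (CARD('a) - 1) * (\<Sum>i\<in>J. card (U i))"
    using card_nonorthogonal_UN_subspaces_le[OF J] U finite_U by blast
  then have "real (CARD('a) * card {v \<in> (\<Union>i\<in>J. U i). dotp k x v \<noteq> 0})
      \<le> real ((CARD('a) - 1) * (\<Sum>i\<in>J. card (U i)))"
    by (simp only: of_nat_le_iff)
  then have le: "?q * ?N \<le> (?q - 1) * (\<Sum>i\<in>J. real (card (U i)))"
    using q by (simp add: of_nat_diff)
  have pow: "?q ^ k = ?q * ?q ^ (k - 1)"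
    using x by (cases k) (auto simp: fvec_def fun_eq_iff)
  have N: "?N = (?q - 1) * ?q ^ (k - 1) - (?q - 1) * ?w"
    using weight_identity by linarith
  have "?q * ?N = (?q - 1) * ?q ^ k - (?q - 1) * (?q * ?w)"
    unfolding N pow by (simp add: algebra_simps)
  with le have "(?q - 1) * (?q ^ k - (\<Sum>i\<in>J. real (card (U i)))) \<le> (?q - 1) * (?q * ?w)"
    unfolding right_diff_distrib by linarith
  then show ?thesis
    using q by (simp add: divide_le_eq mult.commute)
qed

lemma encode_complement_UN_code_nonzero:
  assumes "J \<noteq> {}" and "int (card (\<Union>i\<in>J. U i)) - 1 < int CARD('a) ^ k - int CARD('a) ^ (k - 1)"
  shows "encode k cols x \<noteq> 0"
proof -
  let ?X = "\<Union>i\<in>J. U i"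
  have "0 \<in> ?X"
    using assms(1) U fv.subspace_0 by blast
  have "finite ?X"
    using J finite_U by blast
  then have "card {v \<in> ?X. dotp k x v \<noteq> 0} \<le> card (?X - {0})"
    by (intro card_mono) (auto simp: dotp_zero)
  also have "\<dots> < card ?X"
    using \<open>finite ?X\<close> \<open>0 \<in> ?X\<close> by (rule card_Diff1_less)
  finally have "card {v \<in> ?X. dotp k x v \<noteq> 0} < card ?X" .
  moreover have "real (card ?X) - 1 < real CARD('a) ^ k - real CARD('a) ^ (k - 1)"
    using assms(2) by (simp flip: of_int_less_iff[where 'a=real])
  moreover have "real CARD('a) ^ k = real CARD('a) * real CARD('a) ^ (k - 1)"
    using x by (cases k) (auto simp: fvec_def fun_eq_iff)
  ultimately have "0 < (real CARD('a) - 1) * real (hweight (encode k cols x))"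
    using weight_identity by (simp add: algebra_simps)
  then show ?thesis
    by (auto simp: hweight_def)
qed

end

section \<open>Arithmetic of the Griesmer sum\<close>

lemma geometric_sum_rev: "(x - 1) * (\<Sum>j<n. x ^ (n - Suc j)) = x ^ n - (1 :: 'a::comm_ring_1)"
  by (simp add: power_diff_1_eq sum.nat_diff_reindex)

text \<open>D / q^j = Z - E + 1/q^j, where Z is an integer and E collects the summands q^(u i)/q^(j+1)
  with u i \<le> j; each of these is at most 1/q, so E \<le> card J / q \<le> 1, and E = 0 when j < m.\<close>
lemma griesmer_term_lower_bound:
  fixes q k j m :: nat and u :: "'i \<Rightarrow> nat" and D :: real
  assumes q: "2 \<le> q" and J: "finite J" "card J \<le> q" and m: "\<And>i. i \<in> J \<Longrightarrow> m \<le> u i"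
    and "j < k" and D: "D = (real q ^ k - (\<Sum>i\<in>J. real q ^ u i)) / real q + 1"
  shows "real q ^ (k - Suc j) - (\<Sum>i\<in>J. if j < u i then real q ^ (u i - Suc j) else 0)
      + (if j < m then 1 else 0) \<le> real_of_int \<lceil>D / real q ^ j\<rceil>"
proof -
  let ?Q = "real q"
  define Z :: int where "Z = int q ^ (k - Suc j) - (\<Sum>i\<in>J. if j < u i then int q ^ (u i - Suc j) else 0)"
  define E where "E = (\<Sum>i\<in>J. if j < u i then 0 else ?Q ^ u i / ?Q ^ Suc j)"
  have Q: "?Q > 1" using q by simp
  have powers: "(\<Sum>i\<in>J. ?Q ^ u i / ?Q ^ Suc j) = (\<Sum>i\<in>J. if j < u i then ?Q ^ (u i - Suc j) else 0) + E"
    unfolding E_def sum.distrib[symmetric] using Q by (intro sum.cong) (auto simp: power_diff)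
  have Z: "real_of_int Z = ?Q ^ (k - Suc j) - (\<Sum>i\<in>J. if j < u i then ?Q ^ (u i - Suc j) else 0)"
    by (simp add: Z_def of_int_sum if_distrib cong: if_cong)
  have "?Q ^ k / ?Q ^ Suc j = ?Q ^ (k - Suc j)"
    using Q \<open>j < k\<close> by (simp add: power_diff)
  moreover have "D / ?Q ^ j = ?Q ^ k / ?Q ^ Suc j - (\<Sum>i\<in>J. ?Q ^ u i / ?Q ^ Suc j) + 1 / ?Q ^ j"
    using Q by (simp add: D add_divide_distrib diff_divide_distrib sum_divide_distrib)
  ultimately have eq: "D / ?Q ^ j = real_of_int Z - E + 1 / ?Q ^ j"
    by (simp add: Z powers del: power_Suc)
  have "E \<le> (\<Sum>i\<in>J. 1 / ?Q)"
    unfolding E_def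
  proof (rule sum_mono)
    fix i
    have "?Q ^ u i / ?Q ^ Suc j \<le> ?Q ^ j / ?Q ^ Suc j" if "u i \<le> j"
      using Q that by (intro divide_right_mono power_increasing) auto
    then show "(if j < u i then 0 else ?Q ^ u i / ?Q ^ Suc j) \<le> 1 / ?Q"
      using Q by auto
  qed
  also have "\<dots> \<le> 1" using J Q by (simp add: divide_le_eq)
  finally have "E \<le> 1" .
  have "0 < 1 / ?Q ^ j" using Q by simp
  have "real_of_int Z - 1 < D / ?Q ^ j"
    unfolding eq using \<open>E \<le> 1\<close> \<open>0 < 1 / ?Q ^ j\<close> by linarith
  moreover have "real_of_int Z < D / ?Q ^ j" if "j < m"
  proof -
    have "E = 0"
      unfolding E_def using that m by (intro sum.neutral) (auto dest: less_le_trans)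
    then show ?thesis unfolding eq using \<open>0 < 1 / ?Q ^ j\<close> by linarith
  qed
  ultimately have "Z + (if j < m then 1 else 0) \<le> \<lceil>D / ?Q ^ j\<rceil>"
    by (auto simp: le_ceiling_iff)
  then have "real_of_int (Z + (if j < m then 1 else 0)) \<le> real_of_int \<lceil>D / ?Q ^ j\<rceil>"
    by (simp only: of_int_le_iff)
  then show ?thesis
    by (cases "j < m") (simp_all add: Z)
qed

lemma griesmer_sum_lower_bound:
  fixes q k m :: nat and u :: "'i \<Rightarrow> nat" and D :: real
  assumes q: "2 \<le> q" and J: "finite J" "card J \<le> q" and u: "\<And>i. i \<in> J \<Longrightarrow> m \<le> u i \<and> u i \<le> k"
    and "m \<le> k" and D: "D = (real q ^ k - (\<Sum>i\<in>J. real q ^ u i)) / real q + 1"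
  shows "real q ^ k - 1 - (\<Sum>i\<in>J. real q ^ u i - 1) + (real q - 1) * real m
    \<le> (real q - 1) * (\<Sum>j<k. real_of_int \<lceil>D / real q ^ j\<rceil>)"
proof -
  let ?Q = "real q"
  have inner: "(\<Sum>j<k. if j < u i then ?Q ^ (u i - Suc j) else 0) = (\<Sum>j<u i. ?Q ^ (u i - Suc j))"
    if "i \<in> J" for i
    using u[OF that] by (simp add: sum.If_cases lessThan_subset_iff Int_absorb1 flip: lessThan_def)
  let ?A = "\<Sum>j<k. ?Q ^ (k - Suc j)" and ?B = "\<Sum>i\<in>J. \<Sum>j<u i. ?Q ^ (u i - Suc j)"
  have "?A - ?B + real m
      = (\<Sum>j<k. ?Q ^ (k - Suc j) - (\<Sum>i\<in>J. if j < u i then ?Q ^ (u i - Suc j) else 0)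
         + (if j < m then 1 else 0))"
    using \<open>m \<le> k\<close> inner
    by (simp add: sum.distrib sum_subtractf sum.swap[of _ J] sum.If_cases Int_absorb1 flip: lessThan_def)
  also have "\<dots> \<le> (\<Sum>j<k. real_of_int \<lceil>D / ?Q ^ j\<rceil>)"
    using u by (intro sum_mono griesmer_term_lower_bound[OF q J _ _ D]) auto
  finally have "(?Q - 1) * (?A - ?B + real m) \<le> (?Q - 1) * (\<Sum>j<k. real_of_int \<lceil>D / ?Q ^ j\<rceil>)"
    using q by (intro mult_left_mono) auto
  moreover have "(?Q - 1) * (?A - ?B + real m) = (?Q - 1) * ?A - (?Q - 1) * ?B + (?Q - 1) * real m"
    by (simp only: distrib_left right_diff_distrib)
  moreover have "(?Q - 1) * ?A = ?Q ^ k - 1"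
    by (rule geometric_sum_rev)
  moreover have "(?Q - 1) * ?B = (\<Sum>i\<in>J. ?Q ^ u i - 1)"
    unfolding sum_distrib_left[of _ _ J] by (intro sum.cong refl geometric_sum_rev)
  ultimately show ?thesis
    by linarith
qed

lemma length_lt_griesmer_sum:
  fixes q k n c m l :: nat and u :: "'i \<Rightarrow> nat" and D :: real
  assumes q: "2 \<le> q" and J: "finite J" "J \<noteq> {}" "card J \<le> q"
    and u: "\<And>i. i \<in> J \<Longrightarrow> m \<le> u i \<and> u i \<le> k" and "m \<le> k"
    and D: "D = (real q ^ k - (\<Sum>i\<in>J. real q ^ u i)) / real q + 1"
    and n: "(q - 1) * n + c = q ^ k"
    and c: "int c = int q ^ l + (\<Sum>i\<in>J. int q ^ u i - int q ^ l)"
    and m: "real (card J - 1) * (real q ^ l - 1) / (real q - 1) < real m"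
  shows "int n < (\<Sum>j<k. \<lceil>D / real q ^ j\<rceil>)"
proof -
  let ?Q = "real q" and ?S = "\<Sum>j<k. real_of_int \<lceil>D / real q ^ j\<rceil>"
  have "1 \<le> q" "1 \<le> card J"
    using q J by (auto simp: Suc_le_eq card_gt_0_iff)
  have "real ((q - 1) * n + c) = real (q ^ k)"
    using n by (rule arg_cong)
  then have "(?Q - 1) * real n = ?Q ^ k - real c"
    by (simp only: of_nat_add of_nat_mult of_nat_power of_nat_diff[OF \<open>1 \<le> q\<close>] of_nat_1)
  moreover have "real c = ?Q ^ l + (\<Sum>i\<in>J. ?Q ^ u i) - real (card J) * ?Q ^ l"
    using arg_cong[OF c, of real_of_int] by (simp add: sum_subtractf)
  moreover have "(\<Sum>i\<in>J. ?Q ^ u i - 1) = (\<Sum>i\<in>J. ?Q ^ u i) - real (card J)"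
    by (simp add: sum_subtractf)
  moreover have "(real (card J) - 1) * (?Q ^ l - 1) < (?Q - 1) * real m"
    using m q \<open>1 \<le> card J\<close> by (simp add: pos_divide_less_eq of_nat_diff mult.commute)
  ultimately have "(?Q - 1) * real n < (?Q - 1) * ?S"
    using griesmer_sum_lower_bound[OF q J(1,3) u \<open>m \<le> k\<close> D] by (simp add: algebra_simps)
  then have "real n < ?S"
    using q by (simp add: mult_less_cancel_left)
  then show ?thesis
    by (simp flip: of_int_sum)
qed

section \<open>Distance optimality\<close>

theorem corollary3p1:
  fixes k h :: nat
    and u :: "nat \<Rightarrow> nat"
    and U :: "nat \<Rightarrow> (nat \<Rightarrow> 'a::{finite,field}) set"
    and cols :: "(nat \<Rightarrow> 'a) list"
  defines "q \<equiv> card (UNIV :: 'a set)"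
  assumes k3: "k \<ge> 3"
    and h2: "2 \<le> h" and hq: "h \<le> q"
    and u0: "1 \<le> u 0" and u01: "u 0 < u 1"
    and umono: "\<forall>i. 1 \<le> i \<and> i < h \<longrightarrow> u i \<le> u (i + 1)"
    and Usub: "\<forall>i\<le>h. fv.subspace (U i) \<and> U i \<subseteq> fvec k \<and> fv.dim (U i) = u i"
    and Uint: "\<forall>i\<in>{1..h}. \<forall>j\<in>{1..h}. i \<noteq> j \<longrightarrow> U i \<inter> U j = U 0"
    and ineq: "int q ^ k - int q ^ (k - 1) >
               int q ^ u 0 - 1 + (\<Sum>i=1..h. (int q ^ u i - int q ^ u 0))"
    and cols_in: "\<forall>c\<in>set cols. c \<in> fvec k - {0} - (\<Union>i\<in>{1..h}. U i)"
    and cols_rep: "\<forall>v\<in>fvec k - {0} - (\<Union>i\<in>{1..h}. U i).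
                     \<exists>!j. j < length cols \<and> (\<exists>c::'a. c \<noteq> 0 \<and> cols ! j = fscale c v)"
    and ubig: "real (u 1) > real (h - 1) * (real q ^ u 0 - 1) / (real q - 1)"
  shows "distance_optimal (length cols) (gen_code k cols)"
proof -
  let ?X = "\<Union>i\<in>{1..h}. U i" and ?C = "gen_code k cols"
  define d where "d = (real q ^ k - (\<Sum>i=1..h. real q ^ u i)) / real q"
  have q: "2 \<le> q"
    unfolding q_def by (rule two_le_card_field)
  have U: "fv.subspace (U i) \<and> U i \<subseteq> fvec k" if "i \<le> h" for i
    using Usub that by auto
  have fin_U: "finite (U i)" if "i \<le> h" for i
    using U[OF that] finite_fvec finite_subset by blast
  have card_U: "card (U i) = q ^ u i" if "i \<le> h" for i
    using card_subspace[OF _ fin_U[OF that]] Usub that by (simp add: q_def)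
  have u: "u 1 \<le> u i \<and> u i \<le> k" if "i \<in> {1..h}" for i
  proof
    show "u 1 \<le> u i"
      by (rule lift_Suc_mono_le_ivl[of "{1..<h}" u]) (use that umono in auto)
    show "u i \<le> k"
      using dim_subspace_fvec_le[of "U i" k] Usub that by auto
  qed
  have card_X: "int (card ?X) = int q ^ u 0 + (\<Sum>i=1..h. int q ^ u i - int q ^ u 0)"
    using card_UN_common_intersection[of "{1..h}" U "U 0"] h2 Uint fin_U card_U by simp
  have reps: "proj_representatives (fvec k - {0} - ?X) cols"
    using cols_in cols_rep by (auto simp: proj_representatives_def)
  have weights: "encode k cols x \<noteq> 0 \<and> d \<le> real (hweight (encode k cols x))"
    if "x \<in> fvec k" "x \<noteq> 0" for x
    using encode_complement_UN_code_nonzero[OF _ _ reps that] weight_complement_UN_code_ge[OF _ _ reps that]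
      U card_U h2 ineq card_X by (auto simp: d_def q_def)
  have dim: "fv.dim ?C = k" and min_dist: "d \<le> real (min_dist ?C)"
    using dim_min_dist_gen_code[OF _ weights] k3 by simp_all
  have "?X \<subseteq> fvec k"
    using U by fastforce
  then have "(q - 1) * length cols + card (insert 0 ?X) = q ^ k"
    using length_complement_code[OF _ fscale_mem_UN_subspaces reps] U by (simp add: q_def)
  moreover have "0 \<in> ?X"
    using U h2 fv.subspace_0 by force
  ultimately have "int (length cols) < (\<Sum>j<k. \<lceil>(d + 1) / real q ^ j\<rceil>)"
    using length_lt_griesmer_sum[OF q _ _ _ u _ _ _ card_X] h2 hq u[of 1] ubig
    by (auto simp: d_def insert_absorb)
  then show ?thesis
    using min_dist dim
    by (intro distance_optimal_if_griesmer_violated linear_code_gen_code) (auto simp: q_def)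
qed

end
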